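(* In the method U-CS$(\hat x_0,\chi,\lambda_0,\bar\varepsilon)$ described in the context, if at some execution of Step 1 the current stepsize $\lambda$ satisfies \[ \lambda\le\frac{(1-\chi)^2\bar\varepsilon}{4M_f^2+\bar\varepsilon L_f}, \] then the point $x$ computed in Step 1 satisfies the inequality tested in Step 2, i.e. $f(x)-\ell_f(x;\hat x_{k-1})-(1-\chi)\|x-\hat x_{k-1}\|^2/(2\lambda)\le(1-\chi)\bar\varepsilon/2$. Consequently, if $\lambda_0$ is chosen equal to $\frac{(1-\chi)^2\bar\varepsilon}{4M_f^2+\bar\varepsilon L_f}$, then $\lambda$ remains constant throughout the method.
   Context: Setting: $f,h:\mathbb{R}^n\to\mathbb{R}\cup\{+\infty\}$ proper lsc convex with $\mathrm{dom}\, h\subseteq\mathrm{dom}\, f$, $\phi=f+h$, $\phi_*=\inf\phi$ attained. A subgradient oracle $f':\mathrm{dom}\, h\to\mathbb{R}^n$, $f'(x)\in\partial f(x)$, satisfies $\|f'(x)-f'(y)\|\le2M_f+L_f\|x-y\|$ for all $x,y\in\mathrm{dom}\, h$, with $M_f,L_f\ge0$. $\ell_f(u;x):=f(x)+\langle f'(x),u-x\rangle$. U-CS$(\hat x_0,\chi,\lambda_0,\bar\varepsilon)$ with inputs in $\mathrm{dom}\, h\times[0,1)\times\mathbb{R}_{++}\times\mathbb{R}_{++}$: Step 0: $\lambda=\lambda_0$, $k=1$. Step 1: $x=\mathrm{argmin}_u\{\ell_f(u;\hat x_{k-1})+h(u)+\frac1{2\lambda}\|u-\hat x_{k-1}\|^2\}$;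 if $\phi(x)-\phi_*\le\bar\varepsilon$ stop. Step 2: if $f(x)-\ell_f(x;\hat x_{k-1})-(1-\chi)\|x-\hat x_{k-1}\|^2/(2\lambda)\le(1-\chi)\bar\varepsilon/2$ fails, set $\lambda=\lambda/2$ and go to Step 1; else $\lambda_k=\lambda$, $\hat x_k=x$, $k\leftarrow k+1$, go to Step 1. *)

theory Defs
  imports "HOL-Analysis.Analysis" "HOL-Library.Extended_Real"
begin

definition edom :: "('a \<Rightarrow> ereal) \<Rightarrow> 'a set" where
  "edom F = {x. F x < \<infinity>}"

definition eproper :: "('a \<Rightarrow> ereal) \<Rightarrow> bool" where
  "eproper F \<longleftrightarrow> edom F \<noteq> {} \<and> (\<forall>x. F x \<noteq> -\<infinity>)"

definition epigraph :: "('a \<Rightarrow> ereal) \<Rightarrow> ('a \<times> real) set" where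
  "epigraph F = {(x, r). F x \<le> ereal r}"

definition econvex :: "('a::real_vector \<Rightarrow> ereal) \<Rightarrow> bool" where
  "econvex F \<longleftrightarrow> convex (epigraph F)"

definition elsc :: "('a::real_normed_vector \<Rightarrow> ereal) \<Rightarrow> bool" where
  "elsc F \<longleftrightarrow> closed (epigraph F)"

definition subdiff :: "('a::real_inner \<Rightarrow> ereal) \<Rightarrow> 'a \<Rightarrow> 'a set" where
  "subdiff F x = {v. \<forall>u. F u \<ge> F x + ereal (v \<bullet> (u - x))}"

text \<open>ell f g u x = l_f(u;x) = f(x) + <f'(x), u - x>\<close>
definition ell :: "('a::real_inner \<Rightarrow> ereal) \<Rightarrow> ('a \<Rightarrow> 'a) \<Rightarrow> 'a \<Rightarrow> 'a \<Rightarrow> ereal" where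
  "ell f g u x = f x + ereal (g x \<bullet> (u - x))"

definition phistar :: "('a \<Rightarrow> ereal) \<Rightarrow> ('a \<Rightarrow> ereal) \<Rightarrow> ereal" where
  "phistar f h = (INF u. f u + h u)"

text \<open>x is the minimizer of the Step 1 subproblem with prox center y and stepsize lam.\<close>
definition ucs_prox :: "('a::real_inner \<Rightarrow> ereal) \<Rightarrow> ('a \<Rightarrow> ereal) \<Rightarrow> ('a \<Rightarrow> 'a) \<Rightarrow> 'a \<Rightarrow> real \<Rightarrow> 'a \<Rightarrow> bool" where
  "ucs_prox f h g y lam x \<longleftrightarrow>
     (\<forall>u. ell f g x y + h x + ereal (norm (x - y) ^ 2 / (2 * lam))
          \<le> ell f g u y + h u + ereal (norm (u - y) ^ 2 / (2 * lam)))"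

definition ucs_test :: "('a::real_inner \<Rightarrow> ereal) \<Rightarrow> ('a \<Rightarrow> 'a) \<Rightarrow> real \<Rightarrow> real \<Rightarrow> 'a \<Rightarrow> real \<Rightarrow> 'a \<Rightarrow> bool" where
  "ucs_test f g chi eps y lam x \<longleftrightarrow>
     f x - ell f g x y - ereal ((1 - chi) * norm (x - y) ^ 2 / (2 * lam)) \<le> ereal ((1 - chi) * eps / 2)"

text \<open>ucs_state f h g x0 chi lam0 eps y lam: at some execution of Step 1 of
  U-CS(x0,chi,lam0,eps) the prox center is y (= hat x_{k-1}) and the current stepsize is lam.\<close>
inductive ucs_state :: "('a::real_inner \<Rightarrow> ereal) \<Rightarrow> ('a \<Rightarrow> ereal) \<Rightarrow> ('a \<Rightarrow> 'a) \<Rightarrow> 'a \<Rightarrow> real \<Rightarrow> real \<Rightarrow> real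
    \<Rightarrow> 'a \<Rightarrow> real \<Rightarrow> bool"
  for f h g x0 chi lam0 eps where
  init: "ucs_state f h g x0 chi lam0 eps x0 lam0"
| halve: "ucs_state f h g x0 chi lam0 eps y lam \<Longrightarrow> ucs_prox f h g y lam x \<Longrightarrow>
     \<not> (f x + h x - phistar f h \<le> ereal eps) \<Longrightarrow> \<not> ucs_test f g chi eps y lam x \<Longrightarrow>
     ucs_state f h g x0 chi lam0 eps y (lam / 2)"
| accept: "ucs_state f h g x0 chi lam0 eps y lam \<Longrightarrow> ucs_prox f h g y lam x \<Longrightarrow>
     \<not> (f x + h x - phistar f h \<le> ereal eps) \<Longrightarrow> ucs_test f g chi eps y lam x \<Longrightarrow>
     ucs_state f h g x0 chi lam0 eps x lam"

end

theory Submission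
  imports Defs
begin

(* Write D(w) = f(w) - l_f(w; y). Cut the segment from y to x into N equal pieces: the
   subgradient inequality at the right end point z of a piece bounds the increment of D by
   <f'(z) - f'(y), step>, and the growth condition bounds this by (2 M_f + L_f |z - y|) |step|.
   Summing and letting N go to infinity gives D(x) <= 2 M_f r + L_f r^2 / 2 with r = |x - y|.
   By AM-GM, 2 M_f r <= (1 - chi) eps / 2 + 2 M_f^2 r^2 / ((1 - chi) eps), and the stepsize
   bound makes (1 - chi) r^2 / (2 lambda) dominate the quadratic terms: this is the Step 2
   test. As the test never fails for such lambda, a stepsize starting at the bound is never
   halved. *)

lemma convex_edom:
  assumes "econvex F"
  shows "convex (edom F)"
proof (rule convexI)
  fix x y :: 'a and u v :: real
  assume x: "x \<in> edom F" and y: "y \<in> edom F" and uv: "0 \<le> u" "0 \<le> v" "u + v = 1"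
  obtain a where a: "F x \<le> ereal a"
    using x unfolding edom_def by (cases "F x") auto
  obtain b where b: "F y \<le> ereal b"
    using y unfolding edom_def by (cases "F y") auto
  have "(x, a) \<in> epigraph F" "(y, b) \<in> epigraph F"
    using a b by (auto simp: epigraph_def)
  then have "u *\<^sub>R (x, a) + v *\<^sub>R (y, b) \<in> epigraph F"
    using assms uv unfolding econvex_def convex_def by blast
  then have "F (u *\<^sub>R x + v *\<^sub>R y) \<le> ereal (u * a + v * b)"
    by (simp add: epigraph_def)
  then show "u *\<^sub>R x + v *\<^sub>R y \<in> edom F"
    unfolding edom_def using order_le_less_trans by fastforce
qed

lemma linearization_gap_increment:
  fixes F :: "'a::real_inner \<Rightarrow> real"
  assumes "F z \<ge> F w + g w \<bullet> (z - w)"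
  shows "(F w - F y - g y \<bullet> (w - y)) - (F z - F y - g y \<bullet> (z - y)) \<le> (g w - g y) \<bullet> (w - z)"
  using assms by (simp add: inner_diff_left inner_diff_right algebra_simps)

lemma linearization_gap_le_discretized:
  fixes F :: "'a::real_inner \<Rightarrow> real" and N :: nat
  assumes S: "convex S" "x \<in> S" "y \<in> S"
    and subgradient: "\<forall>z\<in>S. \<forall>u\<in>S. F u \<ge> F z + g z \<bullet> (u - z)"
    and growth: "\<forall>z\<in>S. \<forall>w\<in>S. norm (g z - g w) \<le> 2 * M + L * norm (z - w)"
    and N: "N > 0"
  shows "F x - F y - g y \<bullet> (x - y)
           \<le> 2 * M * norm (x - y) + L * norm (x - y)^2 / 2 + L * norm (x - y)^2 / (2 * real N)"
proof -
  define r where "r = norm (x - y)"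
  define D where "D w = F w - F y - g y \<bullet> (w - y)" for w
  define z where "z k = y + (real k / N) *\<^sub>R (x - y)" for k
  have z_in_S: "z k \<in> S" if "k \<le> N" for k
  proof -
    have "z k = (1 - real k / N) *\<^sub>R y + (real k / N) *\<^sub>R x"
      by (simp add: z_def algebra_simps)
    moreover have "0 \<le> real k / N" "real k / N \<le> 1"
      using that by (auto simp: divide_le_eq_1)
    ultimately show ?thesis
      using convexD_alt[OF S(1,3,2), of "real k / N"] by simp
  qed
  have norm_z: "norm (z k - y) = real k / N * r" for k
    by (simp add: z_def r_def)
  have z_step: "z (Suc k) - z k = (1 / N) *\<^sub>R (x - y)" for k
    by (simp add: z_def add_divide_distrib scaleR_add_left)
  have increment: "D (z (Suc k)) - D (z k) \<le> (2 * M + L * (real (Suc k) / N * r)) * (r / N)"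
    if "k < N" for k
  proof -
    have zs: "z k \<in> S" "z (Suc k) \<in> S"
      using z_in_S that by auto
    have "D (z (Suc k)) - D (z k) \<le> (g (z (Suc k)) - g y) \<bullet> (z (Suc k) - z k)"
      unfolding D_def using linearization_gap_increment subgradient zs by blast
    also have "\<dots> \<le> norm (g (z (Suc k)) - g y) * norm (z (Suc k) - z k)"
      by (rule norm_cauchy_schwarz)
    also have "\<dots> \<le> (2 * M + L * (real (Suc k) / N * r)) * (r / N)"
    proof (rule mult_mono')
      show "norm (g (z (Suc k)) - g y) \<le> 2 * M + L * (real (Suc k) / N * r)"
        using growth zs(2) S(3) norm_z by metis
      show "norm (z (Suc k) - z k) \<le> r / N"
        by (simp add: z_step r_def)
    qed simp_all
    finally show ?thesis .
  qed
  have partial: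
    "D (z k) \<le> 2 * M * r * (real k / N) + L * r^2 * real k * (real k + 1) / (2 * real N ^ 2)"
    if "k \<le> N" for k
    using that
  proof (induction k)
    case 0
    then show ?case by (simp add: z_def D_def)
  next
    case (Suc k)
    then have "D (z (Suc k)) \<le> 2 * M * r * (real k / N)
                 + L * r^2 * real k * (real k + 1) / (2 * real N ^ 2)
                 + (2 * M + L * (real (Suc k) / N * r)) * (r / N)"
      using increment[of k] by simp
    also have "\<dots> = 2 * M * r * (real (Suc k) / N)
                     + L * r^2 * real (Suc k) * (real (Suc k) + 1) / (2 * real N ^ 2)"
      using N by (simp add: field_simps power2_eq_square)
    finally show ?case .
  qed
  have "z N = x"
    using N by (simp add: z_def)
  then have "D x \<le> 2 * M * r * (real N / N) + L * r^2 * real N * (real N + 1) / (2 * real N ^ 2)"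
    using partial[of N] by simp
  also have "\<dots> = 2 * M * r + L * r^2 / 2 + L * r^2 / (2 * real N)"
    using N by (simp add: field_simps power2_eq_square)
  finally show ?thesis
    by (simp add: D_def r_def)
qed

lemma linearization_gap_le:
  fixes F :: "'a::real_inner \<Rightarrow> real"
  assumes "convex S" "x \<in> S" "y \<in> S"
    and "\<forall>z\<in>S. \<forall>u\<in>S. F u \<ge> F z + g z \<bullet> (u - z)"
    and "\<forall>z\<in>S. \<forall>w\<in>S. norm (g z - g w) \<le> 2 * M + L * norm (z - w)"
  shows "F x - F y - g y \<bullet> (x - y) \<le> 2 * M * norm (x - y) + L * norm (x - y)^2 / 2"
proof -
  define c where "c = 2 * M * norm (x - y) + L * norm (x - y)^2 / 2"
  have "(\<lambda>N. c + (L * norm (x - y)^2 / 2) / real N) \<longlonglongrightarrow> c + 0"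
    by (intro tendsto_add tendsto_const lim_const_over_n)
  moreover have "\<forall>N\<ge>1. F x - F y - g y \<bullet> (x - y) \<le> c + (L * norm (x - y)^2 / 2) / real N"
    using linearization_gap_le_discretized[OF assms] by (simp add: c_def)
  ultimately show ?thesis
    unfolding c_def by (intro LIMSEQ_le_const) auto
qed

lemma quadratic_gap_le_of_stepsize:
  fixes a eps M L lam r :: real
  assumes a: "0 < a" "a \<le> 1" and eps: "0 < eps" and L: "0 \<le> L"
    and lam: "0 < lam" "lam \<le> a^2 * eps / (4 * M^2 + eps * L)"
  shows "2 * M * r + L * r^2 / 2 - a * r^2 / (2 * lam) \<le> a * eps / 2"
proof -
  define Q where "Q = 4 * M^2 + eps * L"
  have "0 < Q"
  proof (rule ccontr)
    assume "\<not> 0 < Q"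
    then have "a^2 * eps / Q \<le> 0"
      using a eps by (simp add: divide_nonneg_nonpos)
    then show False
      using lam unfolding Q_def by linarith
  qed
  then have "lam * Q \<le> a^2 * eps"
    using lam unfolding Q_def by (simp add: le_divide_eq)
  then have "r^2 * (lam * Q) \<le> r^2 * (a^2 * eps)"
    by (simp add: mult_left_mono)
  then have "r^2 * Q / (2 * a * eps) \<le> a * r^2 / (2 * lam)"
    using a(1) eps lam(1) by (simp add: divide_simps) (simp add: power2_eq_square algebra_simps)
  moreover have "2 * M * r \<le> a * eps / 2 + 2 * M^2 * r^2 / (a * eps)"
  proof -
    have "0 \<le> (a * eps - 2 * M * r)^2" by simp
    then show ?thesis
      using a eps by (simp add: field_simps power2_eq_square)
  qed
  moreover have "L * r^2 / 2 \<le> L * r^2 / (2 * a)"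
    using a L by (intro divide_left_mono) auto
  moreover have "2 * M^2 * r^2 / (a * eps) + L * r^2 / (2 * a) = r^2 * Q / (2 * a * eps)"
    using a eps unfolding Q_def by (simp add: field_simps power2_eq_square)
  ultimately show ?thesis
    by linarith
qed

locale ucs_problem =
  fixes f h :: "'a::real_inner \<Rightarrow> ereal" and g :: "'a \<Rightarrow> 'a" and Mf Lf :: real
  assumes f_proper: "eproper f" and h_proper: "eproper h" and h_convex: "econvex h"
    and edom_subset: "edom h \<subseteq> edom f"
    and subgradient: "\<forall>x\<in>edom h. g x \<in> subdiff f x"
    and subgradient_growth: "\<forall>x\<in>edom h. \<forall>y\<in>edom h. norm (g x - g y) \<le> 2 * Mf + Lf * norm (x - y)"
    and Lf_nonneg: "0 \<le> Lf"
begin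

lemma f_finite: "x \<in> edom h \<Longrightarrow> f x = ereal (real_of_ereal (f x))"
  using edom_subset f_proper unfolding edom_def eproper_def
  by (cases "f x") auto

lemma subgradient_inequality_real:
  assumes "x \<in> edom h" "u \<in> edom h"
  shows "real_of_ereal (f u) \<ge> real_of_ereal (f x) + g x \<bullet> (u - x)"
proof -
  have "f u \<ge> f x + ereal (g x \<bullet> (u - x))"
    using subgradient assms(1) unfolding subdiff_def by auto
  then show ?thesis
    using f_finite[OF assms(1)] f_finite[OF assms(2)] by (metis ereal_less_eq(3) plus_ereal.simps(1))
qed

lemma prox_in_edom:
  assumes y: "y \<in> edom h" and prox: "ucs_prox f h g y lam x"
  shows "x \<in> edom h"
proof (rule ccontr)
  assume "x \<notin> edom h"
  then have "h x = \<infinity>"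
    unfolding edom_def by (simp add: top.not_eq_extremum)
  moreover have "ell f g x y \<noteq> -\<infinity>"
    using f_finite[OF y] unfolding ell_def by (metis plus_ereal.simps(1) MInfty_neq_ereal(2))
  ultimately have "ell f g x y + h x + ereal (norm (x - y)^2 / (2 * lam)) = \<infinity>"
    by simp
  moreover obtain u where u: "u \<in> edom h"
    using h_proper unfolding eproper_def by auto
  then obtain c where "h u = ereal c"
    using h_proper unfolding edom_def eproper_def by (cases "h u") auto
  then have "ell f g u y + h u + ereal (norm (u - y)^2 / (2 * lam)) \<noteq> \<infinity>"
    unfolding ell_def by (subst f_finite[OF y]) simp
  ultimately show False
    using prox unfolding ucs_prox_def by (metis ereal_infty_less_eq(1))
qed

lemma prox_passes_test:
  assumes y: "y \<in> edom h" and chi: "0 \<le> chi" "chi < 1" and eps: "0 < eps"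
    and lam: "0 < lam" "lam \<le> (1 - chi)^2 * eps / (4 * Mf^2 + eps * Lf)"
    and prox: "ucs_prox f h g y lam x"
  shows "ucs_test f g chi eps y lam x"
proof -
  have x: "x \<in> edom h"
    using prox_in_edom[OF y prox] .
  have "\<forall>z\<in>edom h. \<forall>u\<in>edom h. real_of_ereal (f u) \<ge> real_of_ereal (f z) + g z \<bullet> (u - z)"
    using subgradient_inequality_real by blast
  from linearization_gap_le[OF convex_edom[OF h_convex] x y this subgradient_growth]
  have "real_of_ereal (f x) - real_of_ereal (f y) - g y \<bullet> (x - y)
          \<le> 2 * Mf * norm (x - y) + Lf * norm (x - y)^2 / 2" .
  moreover have "2 * Mf * norm (x - y) + Lf * norm (x - y)^2 / 2
                   - (1 - chi) * norm (x - y)^2 / (2 * lam) \<le> (1 - chi) * eps / 2"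
    using quadratic_gap_le_of_stepsize[of "1 - chi"] chi eps Lf_nonneg lam by simp
  moreover obtain fx fy where "f x = ereal fx" "f y = ereal fy"
    using f_finite[OF x] f_finite[OF y] by metis
  ultimately show ?thesis
    unfolding ucs_test_def ell_def by simp
qed

lemma ucs_state_in_edom:
  assumes "x0 \<in> edom h" "0 < lam0" "ucs_state f h g x0 chi lam0 eps y lam"
  shows "y \<in> edom h \<and> 0 < lam"
  using assms(3,1,2) by induction (auto intro: prox_in_edom)

lemma ucs_state_stepsize_constant:
  assumes x0: "x0 \<in> edom h" and chi: "0 \<le> chi" "chi < 1" and eps: "0 < eps"
    and lam0: "0 < lam0" "lam0 = (1 - chi)^2 * eps / (4 * Mf^2 + eps * Lf)"
    and state: "ucs_state f h g x0 chi lam0 eps y lam"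
  shows "lam = lam0"
  using state
proof induction
  case (halve y lam x)
  have "y \<in> edom h" "0 < lam"
    using ucs_state_in_edom[OF x0 lam0(1) halve.hyps(1)] by auto
  then have "ucs_test f g chi eps y lam x"
    using prox_passes_test[OF _ chi eps] halve lam0(2) by simp
  with halve.hyps(4) show ?case
    by contradiction
qed simp_all

end

theorem lemma2p1:
  fixes f h :: "'a::euclidean_space \<Rightarrow> ereal"
    and g :: "'a \<Rightarrow> 'a"
    and Mf Lf chi lam0 eps :: real
    and x0 :: 'a
  assumes f_cvx: "eproper f" "elsc f" "econvex f"
    and h_cvx: "eproper h" "elsc h" "econvex h"
    and dom: "edom h \<subseteq> edom f"
    and attained: "\<exists>xs. f xs + h xs = phistar f h"
    and subgrad: "\<forall>x\<in>edom h. g x \<in> subdiff f x"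
    and growth: "\<forall>x\<in>edom h. \<forall>y\<in>edom h. norm (g x - g y) \<le> 2 * Mf + Lf * norm (x - y)"
    and MfLf: "Mf \<ge> 0" "Lf \<ge> 0"
    and x0: "x0 \<in> edom h"
    and chi: "0 \<le> chi" "chi < 1"
    and lam0: "lam0 > 0"
    and eps: "eps > 0"
  shows "(\<forall>y lam x. ucs_state f h g x0 chi lam0 eps y lam
              \<and> lam \<le> (1 - chi)^2 * eps / (4 * Mf^2 + eps * Lf)
              \<and> ucs_prox f h g y lam x
            \<longrightarrow> ucs_test f g chi eps y lam x)
       \<and> (lam0 = (1 - chi)^2 * eps / (4 * Mf^2 + eps * Lf)
            \<longrightarrow> (\<forall>y lam. ucs_state f h g x0 chi lam0 eps y lam \<longrightarrow> lam = lam0))"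
proof -
  interpret ucs_problem f h g Mf Lf
    using f_cvx(1) h_cvx(1,3) dom subgrad growth MfLf(2) by unfold_locales
  show ?thesis
    using ucs_state_in_edom[OF x0 lam0] prox_passes_test chi eps
      ucs_state_stepsize_constant[OF x0 chi eps lam0] by blast
qed

end
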